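(* Let $m$ be a positive integer, let $x,\bar x$ be positive integers and $r,\bar r\in\{0,\dots,m-1\}$. Suppose that for some positive integer $j$ we have $r_n(x,r)=r_n(\bar x,\bar r)$ for all $n\ge j$. Then $r_n(x,r)=r_n(\bar x,\bar r)$ for all $n\ge 0$.
   Context: Fix a positive integer $m$. The triangle $T_m$ is an array whose row $x$ ($x=1,2,\dots$) has $x$ entries, in columns $0,\dots,x-1$. Row $1$ is the single entry $1$. For $x>1$, row $x$ is obtained from row $x-1$ by rotating it cyclically left by $m$ positions (the entry in column $c$ of row $x-1$ moves to column $(c-m)\bmod(x-1)\in\{0,\dots,x-2\}$ of row $x$), then appending in column $x-1$ a new entry equal to $1$ plus the entry in column $0$ of row $x-1$. Entries are individual objects keeping their identity as they move. Tracking: for a positive integer $x$ and $r\in\{0,\dots,m-1\}$, follow the individual entry in row $x$, column $r\bmod x$. Let $(x_0,r_0),(x_1,r_1),\dots$ be the list, in strictly increasing lexicographic order, of all integer pairs $(y,c)$ with $y\ge x$, $0\le c\le m-1$, $(y,c)\ge (x,r)$ lexicographically, such that the tracked entry occupies column $c\bmod y$ of row $y$ (so $x_0=x$, $r_0=r$). Write $x_n(x,r)=x_n$, $r_n(x,r)=r_n$. *)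

theory Defs
  imports Main "HOL-Library.Product_Lexorder" "HOL-Library.Infinite_Set"
begin

text \<open>Column (0-based) occupied, in row x+k of T_m, by the entry that sits in
row x, column r mod x.  Passing from row y (length y) to row y+1, the entry in
column c moves to column (c - m) mod y; the appended entry never moves the
tracked one.\<close>
fun trk :: "nat \<Rightarrow> nat \<Rightarrow> nat \<Rightarrow> nat \<Rightarrow> int" where
  "trk m x r 0 = int (r mod x)"
| "trk m x r (Suc k) = (trk m x r k - int m) mod int (x + k)"

definition trackset :: "nat \<Rightarrow> nat \<Rightarrow> nat \<Rightarrow> (nat \<times> nat) set" where
  "trackset m x r = {(y, c). x \<le> y \<and> c < m \<and> (x, r) \<le> (y, c)
                        \<and> trk m x r (y - x) = int (c mod y)}"

definition xn :: "nat \<Rightarrow> nat \<Rightarrow> nat \<Rightarrow> nat \<Rightarrow> nat" where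
  "xn m x r n = fst (enumerate (trackset m x r) n)"

definition rn :: "nat \<Rightarrow> nat \<Rightarrow> nat \<Rightarrow> nat \<Rightarrow> nat" where
  "rn m x r n = snd (enumerate (trackset m x r) n)"

end

theory Submission
  imports Defs
begin

text \<open>The pairs tracked from (x,r) are the orbit of (x,r) under the map
(y,c) \<mapsto> (y + (y+c) div m, (y+c) mod m): the tracked entry, lying in column c mod y
of row y, next reaches one of the columns m-1, ..., 0 once it has been rotated
left by multiples of m. If two orbits have the same second coordinates from step
j on, the difference d of their first coordinates satisfies m d' = (m+1) d, so
m^k divides d for every k and d vanishes at step j (for m \<ge> 2; for m = 1 all
second coordinates are 0). The map is injective on pairs with c < m, so the two
orbits already coincide before step j.\<close>

definition track_next :: "nat \<Rightarrow> nat \<times> nat \<Rightarrow> nat \<times> nat" where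
  "track_next m p = (fst p + (fst p + snd p) div m, (fst p + snd p) mod m)"

definition track_orbit :: "nat \<Rightarrow> nat \<Rightarrow> nat \<Rightarrow> nat \<Rightarrow> nat \<times> nat" where
  "track_orbit m x r n = (track_next m ^^ n) (x, r)"

lemma track_orbit_Suc: "track_orbit m x r (Suc n) = track_next m (track_orbit m x r n)"
  by (simp add: track_orbit_def)

lemma track_orbit_add:
  "track_orbit m x r (k + n) = (track_next m ^^ k) (track_orbit m x r n)"
  by (simp add: track_orbit_def funpow_add)

lemma mod_eq_imp_add_le:
  fixes c d y :: nat
  assumes "c < d" "d mod y = c mod y"
  shows "c + y \<le> d"
proof -
  have "y dvd d - c" using assms by (simp add: mod_eq_dvd_iff_nat)
  then show ?thesis using assms(1) nat_dvd_not_less[of "d - c" y] by linarith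
qed

lemma trk_after_steps:
  assumes "x \<le> y" "trk m x r (y - x) = int (c mod y)" "c < m" "Suc k \<le> (y + c) div m"
  shows "trk m x r (y + Suc k - x) = int (y + c - m * Suc k)"
  using assms(4)
proof (induction k)
  case 0
  have "m \<le> y + c" using 0 by (metis div_less not_le not_one_le_zero One_nat_def)
  have "trk m x r (y + Suc 0 - x) = (int (c mod y) - int m) mod int y"
    using assms(1,2) by (simp add: Suc_diff_le)
  also have "\<dots> = (int c + int y - int m) mod int y"
    by (metis add.commute mod_add_self1 mod_diff_left_eq zmod_int)
  also have "\<dots> = int c + int y - int m"
    using \<open>m \<le> y + c\<close> assms(3) by (intro mod_pos_pos_trivial) auto
  finally show ?case using \<open>m \<le> y + c\<close> by simp
next
  case (Suc k)
  have le: "m * Suc (Suc k) \<le> y + c" using Suc.prems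
    by (metis dual_order.trans div_times_less_eq_dividend mult.commute mult_le_mono2)
  have "trk m x r (y + Suc (Suc k) - x) = (int (y + c - m * Suc k) - int m) mod int (y + Suc k)"
    using assms(1) Suc by (simp add: Suc_diff_le)
  also have "\<dots> = int (y + c - m * Suc (Suc k)) mod int (y + Suc k)"
    using le by (simp add: algebra_simps)
  also have "\<dots> = int (y + c - m * Suc (Suc k))"
    using assms(3) by (intro mod_pos_pos_trivial) auto
  finally show ?case .
qed

lemma track_next_in_trackset:
  assumes "0 < x" "0 < m" "(y, c) \<in> trackset m x r"
  shows "track_next m (y, c) \<in> trackset m x r"
proof -
  have xy: "x \<le> y" and cm: "c < m" and le: "(x, r) \<le> (y, c)"
    and tr: "trk m x r (y - x) = int (c mod y)"
    using assms(3) unfolding trackset_def by auto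
  show ?thesis
  proof (cases "y + c < m")
    case True
    then show ?thesis using xy le tr
      by (auto simp: track_next_def trackset_def less_eq_prod_def)
  next
    case False
    define q where "q = (y + c) div m"
    have "1 \<le> q" using False assms(2) unfolding q_def by (simp add: Suc_le_eq div_greater_zero_iff not_less)
    have "m \<le> m * q" using \<open>1 \<le> q\<close> by simp
    then have small: "(y + c) mod m < y" using cm mult_div_mod_eq[of m "y + c"] unfolding q_def
      by linarith
    have "trk m x r (y + q - x) = int (y + c - m * q)"
      using trk_after_steps[OF xy tr cm, of "q - 1"] \<open>1 \<le> q\<close> unfolding q_def by simp
    also have "y + c - m * q = (y + c) mod m" unfolding q_def by (rule minus_mult_div_eq_mod)
    finally show ?thesis using xy assms(2) le small \<open>1 \<le> q\<close>
      by (auto simp: track_next_def trackset_def less_eq_prod_def q_def)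
  qed
qed

lemma less_track_next: "0 < y \<Longrightarrow> (y, c) < track_next m (y, c)"
  by (cases "m = 0"; cases "y + c < m") (auto simp: track_next_def div_greater_zero_iff)

lemma trackset_gap:
  assumes "(y, c) \<in> trackset m x r" and s: "(y, c) < s" "s < track_next m (y, c)"
  shows "s \<notin> trackset m x r"
proof
  assume "s \<in> trackset m x r"
  then obtain y2 c2 where s_eq: "s = (y2, c2)" and "c2 < m"
    and tr2: "trk m x r (y2 - x) = int (c2 mod y2)"
    unfolding trackset_def by auto
  have xy: "x \<le> y" and cm: "c < m" and tr: "trk m x r (y - x) = int (c mod y)"
    using assms(1) unfolding trackset_def by auto
  consider "y2 = y" "c < c2" | "y < y2" using s(1) s_eq by (auto simp: less_prod_def order.order_iff_strict)
  then show False
  proof cases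
    case 1
    have "c2 < y + c"
      using s(2) s_eq 1 \<open>c2 < m\<close> by (cases "y + c < m") (auto simp: track_next_def)
    then show False using 1 tr tr2 mod_eq_imp_add_le[of c c2 y] by simp
  next
    case 2
    define q where "q = (y + c) div m"
    have "y2 \<le> y + q" using s(2) s_eq unfolding q_def by (auto simp: track_next_def)
    with 2 obtain k where k: "y2 = y + Suc k" "Suc k \<le> q"
      by (metis add_Suc_right less_imp_Suc_add add_le_cancel_left)
    have trk2: "trk m x r (y2 - x) = int (y + c - m * Suc k)"
      using trk_after_steps[OF xy tr cm, of k] k unfolding q_def by simp
    \<comment> \<open>in row y2 the tracked entry still lies beyond column c2\<close>
    have "c2 < y + c - m * Suc k"
    proof (cases "Suc k = q")
      case True
      then show ?thesis using s(2) s_eq k minus_div_mult_eq_mod[of "y + c" m]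
        unfolding q_def by (simp add: track_next_def mult.commute)
    next
      case False
      then have "m * Suc (Suc k) \<le> m * q" using k by (intro mult_le_mono2) simp
      moreover have "m * q \<le> y + c" unfolding q_def by (simp add: mult.commute)
      ultimately show ?thesis using \<open>c2 < m\<close> by simp
    qed
    moreover have "c2 mod y2 \<le> c2" by simp
    ultimately show False using trk2 tr2 by linarith
  qed
qed

lemma enumerate_eq_funpow:
  fixes T :: "'a::wellorder set"
  assumes "a \<in> T" "\<And>s. s \<in> T \<Longrightarrow> a \<le> s"
    and g_in: "\<And>p. p \<in> T \<Longrightarrow> g p \<in> T"
    and g_less: "\<And>p. p \<in> T \<Longrightarrow> p < g p"
    and gap: "\<And>p s. p \<in> T \<Longrightarrow> p < s \<Longrightarrow> s < g p \<Longrightarrow> s \<notin> T"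
  shows "enumerate T n = (g ^^ n) a"
proof -
  have orbit_in: "(g ^^ k) a \<in> T" for k
    by (induction k) (use assms(1) g_in in auto)
  then have "strict_mono (\<lambda>k. (g ^^ k) a)"
    using g_less by (simp add: strict_mono_Suc_iff)
  then have "infinite T"
    using orbit_in range_inj_infinite strict_mono_imp_inj_on finite_subset
    by (metis image_subsetI)
  show ?thesis
  proof (induction n)
    case 0
    show ?case by (simp add: enumerate_0) (use assms(1,2) in \<open>blast intro: Least_equality\<close>)
  next
    case (Suc n)
    have "(LEAST s. s \<in> T \<and> (g ^^ n) a < s) = (g ^^ Suc n) a"
      using orbit_in[of n] g_in g_less gap[of "(g ^^ n) a"]
      by (intro Least_equality) (auto simp: not_less[symmetric])
    then show ?case using Suc by (simp add: enumerate_Suc''[OF \<open>infinite T\<close>])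
  qed
qed

lemma enumerate_trackset:
  assumes "0 < x" "0 < m" "r < m"
  shows "enumerate (trackset m x r) n = track_orbit m x r n"
  unfolding track_orbit_def
proof (rule enumerate_eq_funpow)
  show "(x, r) \<in> trackset m x r" using assms by (simp add: trackset_def)
  show "p \<in> trackset m x r \<Longrightarrow> track_next m p \<in> trackset m x r" for p
    using track_next_in_trackset[OF assms(1,2)] by (cases p) auto
  show "p \<in> trackset m x r \<Longrightarrow> p < track_next m p" for p
    using assms(1) less_track_next by (cases p) (auto simp: trackset_def)
  show "p \<in> trackset m x r \<Longrightarrow> p < s \<Longrightarrow> s < track_next m p \<Longrightarrow> s \<notin> trackset m x r" for p s
    using trackset_gap by (cases p) blast
qed (auto simp: trackset_def)

lemma rn_eq_snd_track_orbit:
  "0 < x \<Longrightarrow> 0 < m \<Longrightarrow> r < m \<Longrightarrow> rn m x r n = snd (track_orbit m x r n)"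
  by (simp add: rn_def enumerate_trackset)

lemma snd_track_orbit_less: "0 < m \<Longrightarrow> r < m \<Longrightarrow> snd (track_orbit m x r n) < m"
  by (cases n) (simp_all add: track_orbit_def track_next_def)

lemma inj_on_track_next: "inj_on (track_next m) {p. snd p < m}"
proof (rule inj_onI)
  fix p p' assume "p \<in> {p. snd p < m}" "p' \<in> {p. snd p < m}"
    and eq: "track_next m p = track_next m p'"
  obtain y c y' c' where p: "p = (y, c)" "p' = (y', c')" "c < m" "c' < m"
    using \<open>p \<in> _\<close> \<open>p' \<in> _\<close> by (cases p, cases p') auto
  define q q' \<rho> where "q = (y + c) div m" and "q' = (y' + c') div m" and "\<rho> = (y + c) mod m"
  have sum: "y + q = y' + q'" and rem: "\<rho> = (y' + c') mod m"
    using eq p unfolding q_def q'_def \<rho>_def by (simp_all add: track_next_def)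
  have e: "y + c = m * q + \<rho>" unfolding q_def \<rho>_def by simp
  have e': "y' + c' = m * q' + \<rho>" unfolding q'_def rem by simp
  \<comment> \<open>(m+1) q + \<rho> = (y + q) + c, and likewise for the primed pair\<close>
  have diff: "int (m + 1) * (int q - int q') = int c - int c'"
    using arg_cong[OF sum, of int] arg_cong[OF e, of int] arg_cong[OF e', of int]
    by (simp add: algebra_simps)
  then have "int (m + 1) dvd int c - int c'" by (metis dvd_triv_left)
  moreover have "\<bar>int c - int c'\<bar> < int (m + 1)" using p(3,4) by simp
  ultimately have "c = c'" using dvd_imp_le_int[of "int c - int c'" "int (m + 1)"] by linarith
  with diff have "q = q'" by simp
  then show "p = p'" using p sum \<open>c = c'\<close> by simp
qed

lemma track_next_fst_diff:
  assumes "snd p = snd p'" "snd (track_next m p) = snd (track_next m p')"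
  shows "int m * (int (fst (track_next m p)) - int (fst (track_next m p')))
           = int (m + 1) * (int (fst p) - int (fst p'))"
proof -
  obtain y y' c where p: "p = (y, c)" "p' = (y', c)" using assms(1) by (cases p, cases p') auto
  define D where "D = int ((y + c) div m) - int ((y' + c) div m)"
  have rem: "(y + c) mod m = (y' + c) mod m" using assms(2) p by (simp add: track_next_def)
  have "int (y + c) - int (y' + c) = int m * D"
    using mult_div_mod_eq[of m "y + c"] mult_div_mod_eq[of m "y' + c"] rem
    unfolding D_def by (metis of_nat_add of_nat_mult right_diff_distrib add_diff_cancel_right)
  then have "int y - int y' = int m * D" by simp
  moreover have "int (fst (track_next m p)) - int (fst (track_next m p')) = int y - int y' + D"
    using p unfolding D_def by (simp add: track_next_def)
  ultimately show ?thesis using p by (simp add: algebra_simps)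
qed

lemma eq_zero_if_mult_recurrence:
  fixes d :: "nat \<Rightarrow> int"
  assumes "2 \<le> m" and rec: "\<And>n. int m * d (Suc n) = int (m + 1) * d n"
  shows "d 0 = 0"
proof (rule ccontr)
  assume "d 0 \<noteq> 0"
  have pow: "int m ^ k * d k = int (m + 1) ^ k * d 0" for k
  proof (induction k)
    case (Suc k)
    have "int m ^ Suc k * d (Suc k) = int m ^ k * (int m * d (Suc k))" by simp
    also have "\<dots> = int (m + 1) * (int m ^ k * d k)" by (simp only: rec mult.left_commute)
    finally show ?case using Suc by simp
  qed simp
  define k where "k = nat \<bar>d 0\<bar>"
  have "coprime (int m) (int (m + 1))" using coprime_add_one_right[of "int m"] by (simp add: add.commute)
  then have "coprime (int m ^ k) (int (m + 1) ^ k)" by simp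
  then have "int m ^ k dvd d 0" using pow[of k] by (metis coprime_dvd_mult_right_iff dvd_triv_left)
  then have "int m ^ k \<le> \<bar>d 0\<bar>" using \<open>d 0 \<noteq> 0\<close> by (simp add: zdvd_imp_le)
  moreover have "k < m ^ k"
    using less_exp[of k] power_mono[of 2 m k] assms(1) by linarith
  ultimately show False unfolding k_def by (simp flip: of_nat_power)
qed

lemma funpow_inj_on_cancel:
  assumes "inj_on f A" "f ` A \<subseteq> A" "a \<in> A" "b \<in> A" "(f ^^ n) a = (f ^^ n) b"
  shows "a = b"
  using assms(3-5)
proof (induction n arbitrary: a b)
  case (Suc n)
  then have "f a = f b" using assms(2) by (simp add: funpow_Suc_right image_subset_iff del: funpow.simps)
  then show ?case using assms(1) Suc.prems(1,2) by (simp add: inj_on_eq_iff)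
qed simp

theorem mainTheorem2:
  fixes m x xb r rb j :: nat
  assumes "0 < m" and "0 < x" and "0 < xb" and "r < m" and "rb < m" and "0 < j"
    and "\<forall>n\<ge>j. rn m x r n = rn m xb rb n"
  shows "\<forall>n. rn m x r n = rn m xb rb n"
proof (cases "m = 1")
  case True
  then show ?thesis using snd_track_orbit_less[of m] assms(1-5) by (simp add: rn_eq_snd_track_orbit)
next
  case False
  let ?A = "track_orbit m x r" and ?B = "track_orbit m xb rb" and ?f = "track_next m"
  have snd_eq: "snd (?A n) = snd (?B n)" if "j \<le> n" for n
    using assms that by (simp add: rn_eq_snd_track_orbit)
  define d where "d k = int (fst (?A (j + k))) - int (fst (?B (j + k)))" for k
  have "2 \<le> m" using False assms(1) by simp
  moreover have "int m * d (Suc k) = int (m + 1) * d k" for k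
    using track_next_fst_diff[of "?A (j + k)" "?B (j + k)" m] snd_eq[of "j + k"] snd_eq[of "Suc (j + k)"]
    unfolding d_def by (simp add: track_orbit_Suc)
  ultimately have "d 0 = 0" by (rule eq_zero_if_mult_recurrence)
  then have "?A j = ?B j" using snd_eq[of j] by (simp add: d_def prod_eq_iff)
  have agree_before: "?A n = ?B n" if "n \<le> j" for n
  proof (rule funpow_inj_on_cancel[OF inj_on_track_next])
    show "?f ` {p. snd p < m} \<subseteq> {p. snd p < m}" using assms(1) by (auto simp: track_next_def)
    show "?A n \<in> {p. snd p < m}" "?B n \<in> {p. snd p < m}"
      by (simp_all add: snd_track_orbit_less assms(1,4,5))
    show "(?f ^^ (j - n)) (?A n) = (?f ^^ (j - n)) (?B n)"
      using \<open>?A j = ?B j\<close> that track_orbit_add[of m x r "j - n" n] track_orbit_add[of m xb rb "j - n" n]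
      by simp
  qed
  show ?thesis
  proof
    fix n
    show "rn m x r n = rn m xb rb n"
      using assms(1-5,7) agree_before[of n] by (cases "j \<le> n") (simp_all add: rn_eq_snd_track_orbit)
  qed
qed

end
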